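(* Let $W$ be a polynomial, $\sigma>0$, and suppose $s$ with $\Re s<0$ is a quasinormal frequency in the sense of Leaver with $\sigma<(\Re\sqrt s)^2$, with corresponding nonzero solution $u(x)=\sum_{k\ge1}H_k(1-x)^k$. Then $u\in X^\sigma$. Consequently, if in addition $s\in\Omega_\sigma$, then $u$ is a nonzero element of $\mathcal D^\sigma$ with $\mathcal L_su=0$, i.e. $s$ is a quasinormal frequency in the sense that $\mathcal L_s:\mathcal D^\sigma\to Y^\sigma$ has nontrivial kernel.
   Context: For $|\arg z|<\pi$, $\sqrt z$ denotes the branch with $\Re\sqrt z>0$. $\mathcal L_su=\frac{d}{dx}(x^2\frac{du}{dx})+s\frac{du}{dx}-Wu$ on $I=(0,1)$. $s$ with $\Re s<0$ is a quasinormal frequency in the sense of Leaver if there is a solution $u$ of $\mathcal L_su=0$ of the form $u(x)=\sum_{k=1}^\infty H_k(1-x)^k$ with $\sup_k|H_ke^{2\sqrt{sk}}|<\infty$. For $\sigma>0$, $u\in C^\infty(\overline I)$, $k\in\{0,1,2\}$: $|u|^{0}_{\sigma,k,0}=\big(\sum_{n=0}^\infty\frac{\sigma^{2n}}{n!^2(n+1)!^2}n^{k}\int_0^1(x/\sigma)^k|\partial_x^nu|^2dx\big)^{1/2}$ (with $0^0:=1$), $\|u\|_{\sigma,0,0}=|u|^0_{\sigma,0,0}$, $[u]^0_\sigma=(\sum_{n=0}^\infty\frac{\sigma^{2n+1}}{n!^2(n+1)!^2}|u^{(n)}(0)|^2)^{1/2}$. $X^\sigma=\{u\in C^\infty(\overline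 I):u(1)=0,\ \|\partial_xu\|_{\sigma,0,0}+|\partial_xu|^0_{\sigma,1,0}+|\partial_xu|^0_{\sigma,2,0}+[\partial_xu]^0_\sigma<\infty\}$, $Y^\sigma=\{u\in C^\infty(\overline I):\|u\|_{\sigma,0,0}+|u|^0_{\sigma,1,0}+[u]^0_\sigma<\infty\}$, $\mathcal D^\sigma=\{u\in X^\sigma:\mathcal L_su\in Y^\sigma\}$. $\Omega^1_\sigma=\{s:\Re s\le0,\ \sigma<|\Im s|\}\cup\{s:\Re s>0,\ \sigma<|s|\}$; $\Omega^2_\sigma=\{s:\ \sigma<|s|+\Re s,\ \sigma>\frac{-\Re(s)|s|}{2(|s|+\Re s)}\}$; $\Omega^3_\sigma=\{s\neq0:\ \sigma(|s|-\sigma+\Re s)-(\sigma(1+\frac{\Re s}{|s|})+\frac12\Re s)^2>0\}$; $\Omega_\sigma=\Omega^1_\sigma\cap(\Omega^2_\sigma\cup\Omega^3_\sigma)$. *)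

theory Defs
  imports "HOL-Analysis.Analysis" "HOL-Computational_Algebra.Polynomial"
begin

text \<open>Closed interval [0,1] = closure of I = (0,1). Derivatives of functions on the
closed interval are taken within [0,1] (one-sided at the endpoints).\<close>

fun dnth :: "nat \<Rightarrow> (real \<Rightarrow> complex) \<Rightarrow> real \<Rightarrow> complex" where
  "dnth 0 f = f"
| "dnth (Suc n) f = (\<lambda>x. vector_derivative (dnth n f) (at x within {0..1}))"

definition smooth01 :: "(real \<Rightarrow> complex) \<Rightarrow> bool" where
  "smooth01 u \<longleftrightarrow> (\<forall>n. \<forall>x\<in>{0..1}. dnth n u differentiable (at x within {0..1}))"

definition Lop :: "complex poly \<Rightarrow> complex \<Rightarrow> (real \<Rightarrow> complex) \<Rightarrow> real \<Rightarrow> complex" where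
  "Lop W s u = (\<lambda>x. dnth 1 (\<lambda>y. complex_of_real (y^2) * dnth 1 u y) x
                     + s * dnth 1 u x - poly W (complex_of_real x) * u x)"

definition sn_term :: "real \<Rightarrow> nat \<Rightarrow> (real \<Rightarrow> complex) \<Rightarrow> nat \<Rightarrow> real" where
  "sn_term \<sigma> k u n = \<sigma>^(2*n) / ((fact n)^2 * (fact (n+1))^2) * real n ^ k *
      integral {0..1} (\<lambda>x. (x/\<sigma>)^k * (cmod (dnth n u x))^2)"

text \<open>|u|^0_{sigma,k,0} < infinity (nonnegative terms)\<close>
definition sn_fin :: "real \<Rightarrow> nat \<Rightarrow> (real \<Rightarrow> complex) \<Rightarrow> bool" where
  "sn_fin \<sigma> k u \<longleftrightarrow> summable (sn_term \<sigma> k u)"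

definition bd_fin :: "real \<Rightarrow> (real \<Rightarrow> complex) \<Rightarrow> bool" where
  "bd_fin \<sigma> u \<longleftrightarrow> summable (\<lambda>n. \<sigma>^(2*n+1) / ((fact n)^2 * (fact (n+1))^2) * (cmod (dnth n u 0))^2)"

definition Xsp :: "real \<Rightarrow> (real \<Rightarrow> complex) set" where
  "Xsp \<sigma> = {u. smooth01 u \<and> u 1 = 0 \<and> sn_fin \<sigma> 0 (dnth 1 u) \<and> sn_fin \<sigma> 1 (dnth 1 u)
               \<and> sn_fin \<sigma> 2 (dnth 1 u) \<and> bd_fin \<sigma> (dnth 1 u)}"

definition Ysp :: "real \<Rightarrow> (real \<Rightarrow> complex) set" where
  "Ysp \<sigma> = {u. smooth01 u \<and> sn_fin \<sigma> 0 u \<and> sn_fin \<sigma> 1 u \<and> bd_fin \<sigma> u}"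

definition Dsp :: "real \<Rightarrow> complex poly \<Rightarrow> complex \<Rightarrow> (real \<Rightarrow> complex) set" where
  "Dsp \<sigma> W s = {u \<in> Xsp \<sigma>. Lop W s u \<in> Ysp \<sigma>}"

definition Omega1 :: "real \<Rightarrow> complex set" where
  "Omega1 \<sigma> = {s. Re s \<le> 0 \<and> \<sigma> < \<bar>Im s\<bar>} \<union> {s. Re s > 0 \<and> \<sigma> < cmod s}"

definition Omega2 :: "real \<Rightarrow> complex set" where
  "Omega2 \<sigma> = {s. \<sigma> < cmod s + Re s \<and> \<sigma> > - Re s * cmod s / (2 * (cmod s + Re s))}"

definition Omega3 :: "real \<Rightarrow> complex set" where
  "Omega3 \<sigma> = {s. s \<noteq> 0 \<and>
     \<sigma> * (cmod s - \<sigma> + Re s) - (\<sigma> * (1 + Re s / cmod s) + Re s / 2)^2 > 0}"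

definition Omega :: "real \<Rightarrow> complex set" where
  "Omega \<sigma> = Omega1 \<sigma> \<inter> (Omega2 \<sigma> \<union> Omega3 \<sigma>)"

definition leaver_solution :: "complex poly \<Rightarrow> complex \<Rightarrow> (real \<Rightarrow> complex) \<Rightarrow> bool" where
  "leaver_solution W s u \<longleftrightarrow>
     (\<exists>H :: nat \<Rightarrow> complex.
        bdd_above (range (\<lambda>k. cmod (H (Suc k) * exp (2 * csqrt (s * of_nat (Suc k))))))
      \<and> (\<forall>x\<in>{0..1}. (\<lambda>k. H (Suc k) * complex_of_real (1 - x) ^ Suc k) sums u x)
      \<and> (\<forall>x\<in>{0<..<1}. Lop W s u x = 0))"

end

theory Submission
  imports Defs
begin

text \<open>Write u(x) = F(1 - x) with F(z) = \<Sum> H_k z^k. Leaver's bound |H_k| \<le> C exp(-2a \<surd>k),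
  with a = Re \<surd>s > 0, makes every moment \<Sum> k^p |H_k| finite and of size O(((p+2)!)^2 / a^(2p+4)),
  by comparing exp(2a \<surd>k) with a single term of its Taylor series. Hence F can be
  differentiated termwise up to the boundary of the unit disc, u is smooth on [0,1], and
  |u^(n)| is bounded by the n-th moment. In the norms defining X^\<sigma> the factorials then cancel
  up to a polynomial factor, leaving a series dominated by n^12 (\<sigma>/a^2)^(2n), which converges
  because \<sigma> < a^2. Finally L_s u = 0 extends from (0,1) to [0,1] by continuity, and the zero
  function lies in Y^\<sigma>.\<close>

definition powser :: "(nat \<Rightarrow> complex) \<Rightarrow> complex \<Rightarrow> complex" where
  "powser c z = (\<Sum>k. c k * z ^ k)"

lemma norm_powser_le:
  assumes "summable (\<lambda>k. norm (c k))" and "norm z \<le> 1"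
  shows "norm (powser c z) \<le> (\<Sum>k. norm (c k))"
proof -
  have le: "norm (c k * z ^ k) \<le> norm (c k)" for k
    using assms(2) mult_left_le[of "norm z ^ k" "norm (c k)"]
    by (simp add: norm_mult norm_power power_le_one)
  have sum: "summable (\<lambda>k. norm (c k * z ^ k))"
    by (rule summable_comparison_test[OF _ assms(1)]) (use le in auto)
  have "norm (powser c z) \<le> (\<Sum>k. norm (c k * z ^ k))"
    unfolding powser_def by (rule summable_norm[OF sum])
  also have "\<dots> \<le> (\<Sum>k. norm (c k))"
    by (rule suminf_le[OF le sum assms(1)])
  finally show ?thesis .
qed

lemma powser_has_field_derivative_cball:
  assumes "summable (\<lambda>k. norm (diffs c k))" and "z \<in> cball 0 1"
  shows "(powser c has_field_derivative powser (diffs c) z) (at z within cball 0 1)"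
proof -
  define f' where "f' = (\<lambda>n (z::complex). of_nat n * c n * z ^ (n - 1))"
  have M: "summable (\<lambda>n. norm (of_nat n * c n))"
    using assms(1) by (subst summable_Suc_iff[symmetric]) (simp add: diffs_def del: of_nat_Suc)
  have bound: "norm (f' n x) \<le> norm (of_nat n * c n)" if "x \<in> cball 0 1" for n x
  proof -
    from that have "norm x ^ (n - 1) \<le> 1" by (simp add: power_le_one)
    thus ?thesis
      unfolding f'_def norm_mult norm_power
      using mult_left_le[of "norm x ^ (n - 1)" "real n * norm (c n)"] by simp
  qed
  have "uniform_limit (cball 0 1) (\<lambda>n x. \<Sum>i<n. f' i x) (\<lambda>x. \<Sum>i. f' i x) sequentially"
    by (rule Weierstrass_m_test[OF bound M])
  then obtain g where g: "\<And>x. x \<in> cball 0 1 \<Longrightarrow> (\<lambda>n. c n * x ^ n) sums g x \<and>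
      (g has_field_derivative (\<Sum>i. f' i x)) (at x within cball 0 1)"
    using has_field_derivative_series[of "cball 0 1" "\<lambda>n x. c n * x ^ n" f' _ 0]
    by (fastforce simp: f'_def intro!: derivative_eq_intros)
  have "summable (\<lambda>i. f' i z)"
    by (rule summable_norm_cancel, rule summable_comparison_test[OF _ M]) (use bound assms(2) in auto)
  then have "(\<lambda>i. f' (Suc i) z) sums (\<Sum>i. f' i z)"
    by (subst sums_Suc_iff) (simp add: f'_def summable_sums)
  moreover have "(\<lambda>i. f' (Suc i) z) = (\<lambda>i. diffs c i * z ^ i)"
    by (auto simp: f'_def diffs_def)
  ultimately have "(\<Sum>i. f' i z) = powser (diffs c) z"
    by (simp add: powser_def sums_iff)
  moreover have "\<And>x. x \<in> cball 0 1 \<Longrightarrow> powser c x = g x"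
    using g by (simp add: powser_def sums_iff)
  ultimately show ?thesis
    using g[OF assms(2)] unfolding has_field_derivative_def
    by (metis has_derivative_transform assms(2))
qed

lemma powser_reflect_has_vector_derivative:
  assumes "summable (\<lambda>k. norm (diffs c k))" and "x \<in> {0..1}"
  shows "((\<lambda>x. powser c (of_real (1 - x))) has_vector_derivative - powser (diffs c) (of_real (1 - x)))
           (at x within {0..1})"
proof -
  have img: "(\<lambda>x. complex_of_real (1 - x)) ` {0..1} \<subseteq> cball 0 1"
    by (auto simp: cmod_def)
  have "((\<lambda>x. complex_of_real (1 - x)) has_vector_derivative -1) (at x within {0..1})"
    by (auto intro!: derivative_eq_intros)
  moreover have "(powser c has_field_derivative powser (diffs c) (of_real (1 - x)))
      (at (of_real (1 - x)) within (\<lambda>x. complex_of_real (1 - x)) ` {0..1})"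
    using powser_has_field_derivative_cball[OF assms(1)] img assms(2)
    by (meson has_field_derivative_subset image_subset_iff atLeastAtMost_iff imageI)
  ultimately show ?thesis
    using field_vector_diff_chain_within by (fastforce simp: o_def)
qed

lemma norm_diffs_iter_le:
  fixes c :: "nat \<Rightarrow> 'a::real_normed_field"
  shows "norm ((diffs ^^ n) c k) \<le> real (k + n) ^ n * norm (c (k + n))"
proof (induction n arbitrary: k)
  case (Suc n)
  have "norm ((diffs ^^ Suc n) c k) = real (Suc k) * norm ((diffs ^^ n) c (Suc k))"
    by (simp add: diffs_def norm_mult del: of_nat_Suc)
  also have "\<dots> \<le> real (Suc k) * (real (Suc k + n) ^ n * norm (c (Suc k + n)))"
    using Suc.IH[of "Suc k"] by (intro mult_left_mono) auto
  also have "\<dots> \<le> real (k + Suc n) * real (k + Suc n) ^ n * norm (c (k + Suc n))"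
    by (simp add: mult.assoc mult_right_mono)
  finally show ?case by simp
qed simp

lemma
  fixes c :: "nat \<Rightarrow> 'a::real_normed_field"
  assumes "summable (\<lambda>m. real m ^ n * norm (c m))"
  shows summable_norm_diffs_iter: "summable (\<lambda>k. norm ((diffs ^^ n) c k))"
    and suminf_norm_diffs_iter_le: "(\<Sum>k. norm ((diffs ^^ n) c k)) \<le> (\<Sum>m. real m ^ n * norm (c m))"
proof -
  have shifted: "summable (\<lambda>k. real (k + n) ^ n * norm (c (k + n)))"
    using summable_ignore_initial_segment[OF assms, of n] by simp
  show sum: "summable (\<lambda>k. norm ((diffs ^^ n) c k))"
    by (rule summable_comparison_test[OF _ shifted])
       (use norm_diffs_iter_le[of n c] in \<open>auto intro!: exI[of _ 0]\<close>)
  have "(\<Sum>k. norm ((diffs ^^ n) c k)) \<le> (\<Sum>k. real (k + n) ^ n * norm (c (k + n)))"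
    by (rule suminf_le[OF norm_diffs_iter_le sum shifted])
  also have "\<dots> = (\<Sum>m. real m ^ n * norm (c m)) - (\<Sum>i<n. real i ^ n * norm (c i))"
    using suminf_minus_initial_segment[OF assms, of n] by simp
  also have "\<dots> \<le> (\<Sum>m. real m ^ n * norm (c m))"
    by (simp add: sum_nonneg)
  finally show "(\<Sum>k. norm ((diffs ^^ n) c k)) \<le> (\<Sum>m. real m ^ n * norm (c m))" .
qed

lemma csqrt_mult_of_nat: "csqrt (s * of_nat k) = of_real (sqrt (real k)) * csqrt s"
proof (cases "k = 0")
  case False
  show ?thesis
  proof (rule csqrt_unique)
    show "(complex_of_real (sqrt (real k)) * csqrt s)\<^sup>2 = s * of_nat k"
      by (simp add: power_mult_distrib power2_csqrt flip: of_real_power)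
    show "0 < Re (complex_of_real (sqrt (real k)) * csqrt s) \<or>
          Re (complex_of_real (sqrt (real k)) * csqrt s) = 0 \<and> 0 \<le> Im (complex_of_real (sqrt (real k)) * csqrt s)"
      using csqrt_principal[of s] False by auto
  qed
qed simp

lemma leaver_solution_powser:
  assumes "leaver_solution W s u"
  obtains c C where "c 0 = 0"
    and "\<And>m. m > 0 \<Longrightarrow> norm (c m) \<le> C * exp (-2 * Re (csqrt s) * sqrt (real m))"
    and "\<And>x. x \<in> {0..1} \<Longrightarrow> u x = powser c (of_real (1 - x))"
    and "\<forall>x\<in>{0<..<1}. Lop W s u x = 0"
proof -
  obtain H :: "nat \<Rightarrow> complex" where
    H_bdd: "bdd_above (range (\<lambda>k. cmod (H (Suc k) * exp (2 * csqrt (s * of_nat (Suc k))))))"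
    and H_sums: "\<forall>x\<in>{0..1}. (\<lambda>k. H (Suc k) * complex_of_real (1 - x) ^ Suc k) sums u x"
    and L: "\<forall>x\<in>{0<..<1}. Lop W s u x = 0"
    using assms unfolding leaver_solution_def by blast
  obtain C where C: "\<And>k. cmod (H (Suc k) * exp (2 * csqrt (s * of_nat (Suc k)))) \<le> C"
    using H_bdd unfolding bdd_above_def by auto
  define c where "c m = (if m = 0 then 0 else H m)" for m
  have "c 0 = 0" by (simp add: c_def)
  moreover have "norm (c m) \<le> C * exp (-2 * Re (csqrt s) * sqrt (real m))" if "m > 0" for m
  proof -
    obtain k where k: "m = Suc k" using \<open>m > 0\<close> gr0_implies_Suc by blast
    have "cmod (exp (2 * csqrt (s * of_nat m))) = exp (2 * Re (csqrt s) * sqrt (real m))"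
      by (simp add: csqrt_mult_of_nat norm_exp_eq_Re)
    then have "norm (H m) * exp (2 * Re (csqrt s) * sqrt (real m)) \<le> C"
      using C[of k] k by (simp add: norm_mult mult.assoc)
    then show ?thesis
      using that by (simp add: c_def exp_minus field_simps)
  qed
  moreover have "u x = powser c (of_real (1 - x))" if "x \<in> {0..1}" for x
  proof -
    have "(\<lambda>k. c (Suc k) * complex_of_real (1 - x) ^ Suc k) sums u x"
      using H_sums that by (simp add: c_def)
    then show ?thesis
      by (subst (asm) sums_Suc_iff) (simp add: c_def powser_def sums_iff)
  qed
  ultimately show ?thesis
    using that L by blast
qed

lemma power_div_fact_le_exp:
  fixes y :: real assumes "y \<ge> 0"
  shows "y ^ j / fact j \<le> exp y"
proof -
  have "(\<Sum>n\<in>{j}. y ^ n / fact n) \<le> (\<Sum>n. y ^ n / fact n)"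
    using assms summable_exp_generic[of y]
    by (intro sum_le_suminf) (auto simp: divide_inverse ac_simps)
  then show ?thesis by (simp add: exp_def divide_inverse ac_simps)
qed

lemma fact_double_le: "(fact (2 * j) :: real) \<le> 4 ^ j * (fact j)\<^sup>2"
proof -
  have "fact (2 * j) = (fact j)\<^sup>2 * (2 * j choose j)"
    using binomial_fact_lemma[of j "2 * j"] by (simp add: power2_eq_square mult_2)
  also have "\<dots> \<le> (fact j)\<^sup>2 * 2 ^ (2 * j)"
    by (intro mult_left_mono binomial_le_pow2) auto
  finally have "real (fact (2 * j)) \<le> real ((fact j)\<^sup>2 * 2 ^ (2 * j))"
    by linarith
  moreover have "(2::real) ^ (2 * j) = 4 ^ j" by (simp add: power_mult)
  ultimately show ?thesis by (simp add: mult.commute)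
qed

text \<open>Taking the term of order \<open>2(p+2)\<close> of the exponential series.\<close>
lemma power_mult_exp_sqrt_le:
  fixes a :: real assumes "a > 0" and "m > 0"
  shows "real m ^ p * exp (-2 * a * sqrt (real m)) \<le> (fact (p + 2))\<^sup>2 / a ^ (2 * (p + 2)) / real m ^ 2"
proof -
  define j where "j = 2 * (p + 2)"
  define y where "y = 2 * a * sqrt (real m)"
  have yj: "y ^ j = (2 * a) ^ j * real m ^ (p + 2)"
    by (simp add: y_def j_def power_mult_distrib power_mult)
  have "y ^ j / fact j \<le> exp y"
    using assms by (intro power_div_fact_le_exp) (simp add: y_def)
  then have "exp (-y) \<le> fact j / ((2 * a) ^ j * real m ^ (p + 2))"
    using assms by (simp add: exp_minus yj field_simps)
  then have "real m ^ p * exp (-y) \<le> real m ^ p * (fact j / ((2 * a) ^ j * real m ^ (p + 2)))"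
    by (intro mult_left_mono) auto
  also have "\<dots> = fact j / (2 * a) ^ j / real m ^ 2"
    using assms by (simp add: field_simps power_add power2_eq_square)
  also have "\<dots> \<le> 4 ^ (p + 2) * (fact (p + 2))\<^sup>2 / (2 * a) ^ j / real m ^ 2"
    unfolding j_def using assms by (intro divide_right_mono fact_double_le) auto
  also have "\<dots> = (fact (p + 2))\<^sup>2 / a ^ (2 * (p + 2)) / real m ^ 2"
    using assms by (simp add: j_def power_mult_distrib power_mult)
  finally show ?thesis by (simp add: y_def)
qed

lemma
  fixes c :: "nat \<Rightarrow> 'a::real_normed_vector" and a C :: real
  assumes "a > 0" and "c 0 = 0"
    and decay: "\<And>m. m > 0 \<Longrightarrow> norm (c m) \<le> C * exp (-2 * a * sqrt (real m))"
  shows summable_moment_exp_sqrt_decay: "summable (\<lambda>m. real m ^ p * norm (c m))"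
    and suminf_moment_exp_sqrt_decay_le:
      "(\<Sum>m. real m ^ p * norm (c m)) \<le> C * (\<Sum>m. 1 / real m ^ 2) * ((fact (p + 2))\<^sup>2 / a ^ (2 * (p + 2)))"
proof -
  define K where "K = C * ((fact (p + 2))\<^sup>2 / a ^ (2 * (p + 2)))"
  have C: "C \<ge> 0"
  proof -
    have "0 \<le> C * exp (-2 * a)"
      using decay[of 1] norm_ge_zero[of "c 1"] by (simp del: norm_ge_zero)
    then show ?thesis by (simp add: zero_le_mult_iff)
  qed
  have zeta: "summable (\<lambda>m. 1 / real m ^ 2)"
    using inverse_power_summable[of 2] by (simp add: divide_inverse)
  have le: "real m ^ p * norm (c m) \<le> K * (1 / real m ^ 2)" for m
  proof (cases "m = 0")
    case False
    have "real m ^ p * norm (c m) \<le> real m ^ p * (C * exp (-2 * a * sqrt (real m)))"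
      using decay False by (intro mult_left_mono) auto
    also have "\<dots> = C * (real m ^ p * exp (-2 * a * sqrt (real m)))" by simp
    also have "\<dots> \<le> K * (1 / real m ^ 2)"
      using mult_left_mono[OF power_mult_exp_sqrt_le[OF assms(1), of m p] C] False
      by (simp add: K_def)
    finally show ?thesis .
  qed (simp add: assms(2))
  have sumK: "summable (\<lambda>m. K * (1 / real m ^ 2))"
    using zeta by (rule summable_mult)
  show sum: "summable (\<lambda>m. real m ^ p * norm (c m))"
    by (rule summable_comparison_test[OF _ sumK]) (use le in auto)
  have "(\<Sum>m. real m ^ p * norm (c m)) \<le> (\<Sum>m. K * (1 / real m ^ 2))"
    by (rule suminf_le[OF le sum sumK])
  also have "\<dots> = K * (\<Sum>m. 1 / real m ^ 2)"
    by (rule suminf_mult[OF zeta])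
  finally show "(\<Sum>m. real m ^ p * norm (c m)) \<le> C * (\<Sum>m. 1 / real m ^ 2) * ((fact (p + 2))\<^sup>2 / a ^ (2 * (p + 2)))"
    by (simp only: K_def mult_ac)
qed

lemma vector_derivative_within_01:
  assumes "x \<in> {0..1::real}" and "(f has_vector_derivative f') (at x within {0..1})"
  shows "vector_derivative f (at x within {0..1}) = f'"
  using vector_derivative_within_cbox[of 0 1 x f f'] assms by (simp add: cbox_interval)

context
  fixes c :: "nat \<Rightarrow> complex" and u :: "real \<Rightarrow> complex"
  assumes moments: "\<And>n. summable (\<lambda>m. real m ^ n * norm (c m))"
    and u_eq: "\<And>x. x \<in> {0..1} \<Longrightarrow> u x = powser c (of_real (1 - x))"
begin

private lemma reflected_derivative_step:
  assumes "x \<in> {0..1}"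
  shows "((\<lambda>x. (-1) ^ n * powser ((diffs ^^ n) c) (of_real (1 - x))) has_vector_derivative
           (-1) ^ Suc n * powser ((diffs ^^ Suc n) c) (of_real (1 - x))) (at x within {0..1})"
  using has_vector_derivative_mult_right[OF powser_reflect_has_vector_derivative
      [OF summable_norm_diffs_iter[OF moments, of "Suc n", simplified] assms], of "(-1) ^ n"]
  by simp

lemma dnth_powser_reflect:
  "x \<in> {0..1} \<Longrightarrow> dnth n u x = (-1) ^ n * powser ((diffs ^^ n) c) (of_real (1 - x))"
proof (induction n arbitrary: x)
  case (Suc n)
  have "(dnth n u has_vector_derivative (-1) ^ Suc n * powser ((diffs ^^ Suc n) c) (of_real (1 - x)))
      (at x within {0..1})"
    by (rule has_vector_derivative_transform[OF Suc.prems _ reflected_derivative_step[OF Suc.prems]])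
       (use Suc.IH in auto)
  then show ?case
    using vector_derivative_within_01[OF Suc.prems] by simp
qed (simp add: u_eq)

lemma dnth_powser_reflect_has_vector_derivative:
  assumes "x \<in> {0..1}"
  shows "(dnth n u has_vector_derivative dnth (Suc n) u x) (at x within {0..1})"
  using has_vector_derivative_transform[OF assms _ reflected_derivative_step[OF assms, of n]]
    dnth_powser_reflect[OF assms, of "Suc n"] dnth_powser_reflect[of _ n]
  by simp

lemma norm_dnth_powser_reflect_le:
  assumes "x \<in> {0..1}"
  shows "norm (dnth n u x) \<le> (\<Sum>m. real m ^ n * norm (c m))"
proof -
  have "norm (complex_of_real (1 - x)) \<le> 1"
    using assms by (auto simp: cmod_def)
  then have "norm (powser ((diffs ^^ n) c) (of_real (1 - x))) \<le> (\<Sum>k. norm ((diffs ^^ n) c k))"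
    by (rule norm_powser_le[OF summable_norm_diffs_iter[OF moments]])
  also have "\<dots> \<le> (\<Sum>m. real m ^ n * norm (c m))"
    by (rule suminf_norm_diffs_iter_le[OF moments])
  finally show ?thesis
    using dnth_powser_reflect[OF assms, of n] by (simp add: norm_mult norm_power)
qed

end

lemma summable_pow_mult_geometric:
  fixes q :: real assumes "0 \<le> q" and "q < 1"
  shows "summable (\<lambda>n. real (n + k) ^ d * q ^ n)"
proof -
  have "(\<lambda>n. real (n + k) / real (Suc n + k)) \<longlonglongrightarrow> 1"
    by real_asymp
  from tendsto_power[OF this, of d]
  have "(\<lambda>n. norm (real (n + k) ^ d) / norm (real (Suc n + k) ^ d)) \<longlonglongrightarrow> 1"
    by (simp add: power_divide)
  then have "conv_radius (\<lambda>n. real (n + k) ^ d) = 1"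
    by (intro conv_radius_ratio_limit_nonzero[of _ 1]) auto
  then show ?thesis
    using assms by (intro summable_in_conv_radius) auto
qed

lemma summable_weighted_factorial_bounds:
  fixes \<sigma> a A :: real and b :: "nat \<Rightarrow> real"
  assumes "\<sigma> > 0" and "a > 0" and "\<sigma> < a\<^sup>2"
    and b_nonneg: "\<And>n. 0 \<le> b n" and b_le: "\<And>n. b n \<le> A * ((fact (n + 3))\<^sup>2 / a ^ (2 * (n + 3)))"
  shows "summable (\<lambda>n. \<sigma> ^ (2 * n) * (real n + 1)\<^sup>2 * (b n)\<^sup>2 / ((fact n)\<^sup>2 * (fact (n + 1))\<^sup>2))"
proof -
  \<comment> \<open>after cancelling factorials, the n-th term is at most A^2/a^12 (n+3)^12 q^n\<close>
  define q where "q = (\<sigma> / a\<^sup>2)\<^sup>2"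
  have "0 \<le> q" "q < 1"
    using assms(1-3) by (auto simp: q_def power_less_one_iff)
  then have geometric: "summable (\<lambda>n. A\<^sup>2 / a ^ 12 * (real (n + 3) ^ 12 * q ^ n))"
    by (intro summable_mult summable_pow_mult_geometric)
  show ?thesis
  proof (rule summable_comparison_test[OF _ geometric], intro exI[of _ 0] allI impI)
    fix n :: nat
    define F where "F = (fact n :: real)"
    define X where "X = real ((n + 1) * (n + 2) * (n + 3))"
    have F: "F > 0" by (simp add: F_def)
    have fact3: "fact (n + 3) = X * F"
      by (simp add: F_def X_def fact_Suc numeral_3_eq_3 numeral_2_eq_2 algebra_simps)
    have fact1: "fact (n + 1) = (real n + 1) * F"
      by (simp add: F_def fact_Suc algebra_simps)
    have X: "X ^ 4 \<le> real (n + 3) ^ 12"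
    proof -
      have "X \<le> real (n + 3) ^ 3"
        unfolding X_def of_nat_mult by (simp add: power3_eq_cube mult_mono)
      then have "X ^ 4 \<le> (real (n + 3) ^ 3) ^ 4"
        by (intro power_mono) (simp_all add: X_def)
      then show ?thesis by (simp flip: power_mult)
    qed
    have "(b n)\<^sup>2 \<le> (A * (X * F)\<^sup>2 / a ^ (2 * (n + 3)))\<^sup>2"
      using b_le[of n] b_nonneg[of n] fact3 by (intro power_mono) auto
    then have "\<sigma> ^ (2 * n) * (real n + 1)\<^sup>2 * (b n)\<^sup>2 / ((fact n)\<^sup>2 * (fact (n + 1))\<^sup>2)
        \<le> \<sigma> ^ (2 * n) * (real n + 1)\<^sup>2 * (A * (X * F)\<^sup>2 / a ^ (2 * (n + 3)))\<^sup>2 / ((fact n)\<^sup>2 * (fact (n + 1))\<^sup>2)"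
      using assms(1) by (intro divide_right_mono mult_left_mono) auto
    also have "\<dots> = A\<^sup>2 / a ^ 12 * (X ^ 4 * q ^ n)"
      unfolding fact1 F_def[symmetric] q_def power_mult_distrib using F assms(2)
      by (simp add: field_simps power_mult_distrib power_add power_mult flip: power_mult)
    also have "\<dots> \<le> A\<^sup>2 / a ^ 12 * (real (n + 3) ^ 12 * q ^ n)"
      using X \<open>0 \<le> q\<close> by (intro mult_left_mono mult_right_mono) auto
    finally show "norm (\<sigma> ^ (2 * n) * (real n + 1)\<^sup>2 * (b n)\<^sup>2 / ((fact n)\<^sup>2 * (fact (n + 1))\<^sup>2))
        \<le> A\<^sup>2 / a ^ 12 * (real (n + 3) ^ 12 * q ^ n)"
      using assms(1) by simp
  qed
qed

lemma integral_01_bounds: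
  fixes g :: "real \<Rightarrow> real"
  assumes "\<And>x. x \<in> {0..1} \<Longrightarrow> 0 \<le> g x \<and> g x \<le> M"
  shows "0 \<le> integral {0..1} g \<and> integral {0..1} g \<le> M"
proof (cases "g integrable_on {0..1}")
  case True
  have "integral {0..1} g \<le> integral {0..1} (\<lambda>x::real. M)"
    by (rule integral_le) (use True assms in auto)
  then show ?thesis using integral_nonneg[OF True] assms by auto
next
  case False
  then show ?thesis using assms[of 0] by (simp add: not_integrable_integral)
qed

context
  fixes \<sigma> :: real and v :: "real \<Rightarrow> complex" and b :: "nat \<Rightarrow> real"
  assumes \<sigma>: "\<sigma> > 0"
    and dnth_le: "\<And>n x. x \<in> {0..1} \<Longrightarrow> cmod (dnth n v x) \<le> b n"
    and weighted: "summable (\<lambda>n. \<sigma> ^ (2 * n) * (real n + 1)\<^sup>2 * (b n)\<^sup>2 / ((fact n)\<^sup>2 * (fact (n + 1))\<^sup>2))"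
begin

private abbreviation T where
  "T n \<equiv> \<sigma> ^ (2 * n) * (real n + 1)\<^sup>2 * (b n)\<^sup>2 / ((fact n)\<^sup>2 * (fact (n + 1))\<^sup>2)"

private lemma square_dnth_le: "x \<in> {0..1} \<Longrightarrow> (cmod (dnth n v x))\<^sup>2 \<le> (b n)\<^sup>2"
  using dnth_le by (intro power_mono) auto

lemma sn_fin_of_dnth_bounds:
  assumes "k \<le> 2"
  shows "sn_fin \<sigma> k v"
proof -
  have bound: "norm (sn_term \<sigma> k v n) \<le> (1 + 1 / \<sigma>)\<^sup>2 * T n" for n
  proof -
    define I where "I = integral {0..1} (\<lambda>x. (x / \<sigma>) ^ k * (cmod (dnth n v x))\<^sup>2)"
    define E where "E = \<sigma> ^ (2 * n) / ((fact n)\<^sup>2 * (fact (n + 1))\<^sup>2)"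
    have E: "E \<ge> 0" using \<sigma> by (simp add: E_def)
    have I: "0 \<le> I \<and> I \<le> (1 / \<sigma>) ^ k * (b n)\<^sup>2"
      unfolding I_def
    proof (rule integral_01_bounds)
      fix x :: real assume x: "x \<in> {0..1}"
      have "(x / \<sigma>) ^ k \<le> (1 / \<sigma>) ^ k"
        using x \<sigma> by (intro power_mono divide_right_mono) auto
      then show "0 \<le> (x / \<sigma>) ^ k * (cmod (dnth n v x))\<^sup>2 \<and>
                 (x / \<sigma>) ^ k * (cmod (dnth n v x))\<^sup>2 \<le> (1 / \<sigma>) ^ k * (b n)\<^sup>2"
        using x \<sigma> square_dnth_le[OF x, of n] by (auto intro!: mult_mono)
    qed
    have weight: "real n ^ k * (1 / \<sigma>) ^ k \<le> (1 + 1 / \<sigma>)\<^sup>2 * (real n + 1)\<^sup>2"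
    proof -
      have "real n ^ k * (1 / \<sigma>) ^ k = (real n / \<sigma>) ^ k" by (simp add: power_divide)
      also have "\<dots> \<le> (1 + real n / \<sigma>) ^ k" using \<sigma> by (intro power_mono) auto
      also have "\<dots> \<le> (1 + real n / \<sigma>)\<^sup>2" using \<sigma> assms by (intro power_increasing) auto
      also have "\<dots> \<le> ((1 + 1 / \<sigma>) * (real n + 1))\<^sup>2"
      proof (intro power_mono)
        show "1 + real n / \<sigma> \<le> (1 + 1 / \<sigma>) * (real n + 1)"
          using \<sigma> by (simp add: field_simps)
      qed (use \<sigma> in auto)
      finally show ?thesis by (simp add: power_mult_distrib)
    qed
    have "norm (sn_term \<sigma> k v n) = E * real n ^ k * I"
      using I E by (simp add: sn_term_def E_def I_def)
    also have "\<dots> \<le> E * (real n ^ k * (1 / \<sigma>) ^ k) * (b n)\<^sup>2"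
      using I E by (simp add: mult_left_mono mult.assoc)
    also have "\<dots> \<le> E * ((1 + 1 / \<sigma>)\<^sup>2 * (real n + 1)\<^sup>2) * (b n)\<^sup>2"
      using weight E by (intro mult_right_mono mult_left_mono) auto
    also have "\<dots> = (1 + 1 / \<sigma>)\<^sup>2 * T n"
      by (simp add: E_def)
    finally show ?thesis .
  qed
  show ?thesis unfolding sn_fin_def
    by (rule summable_comparison_test[OF _ summable_mult[OF weighted]]) (use bound in auto)
qed

lemma bd_fin_of_dnth_bounds: "bd_fin \<sigma> v"
proof -
  have bound: "norm (\<sigma> ^ (2 * n + 1) / ((fact n)\<^sup>2 * (fact (n + 1))\<^sup>2) * (cmod (dnth n v 0))\<^sup>2) \<le> \<sigma> * T n"
    for n
  proof -
    have "(cmod (dnth n v 0))\<^sup>2 \<le> (real n + 1)\<^sup>2 * (b n)\<^sup>2"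
      using square_dnth_le[of 0 n] mult_right_mono[of 1 "(real n + 1)\<^sup>2" "(b n)\<^sup>2"] by simp
    then have "\<sigma> ^ (2 * n + 1) / ((fact n)\<^sup>2 * (fact (n + 1))\<^sup>2) * (cmod (dnth n v 0))\<^sup>2
        \<le> \<sigma> ^ (2 * n + 1) / ((fact n)\<^sup>2 * (fact (n + 1))\<^sup>2) * ((real n + 1)\<^sup>2 * (b n)\<^sup>2)"
      using \<sigma> by (intro mult_left_mono) auto
    also have "\<dots> = \<sigma> * T n" by (simp add: field_simps)
    finally show ?thesis using \<sigma> by simp
  qed
  show ?thesis unfolding bd_fin_def
    by (rule summable_comparison_test[OF _ summable_mult[OF weighted]]) (use bound in auto)
qed

end

lemma dnth_vanishing:
  assumes "\<forall>x\<in>{0..1::real}. f x = 0" and "x \<in> {0..1}"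
  shows "dnth n f x = 0"
  using assms(2)
proof (induction n arbitrary: x)
  case (Suc n)
  have "(dnth n f has_vector_derivative 0) (at x within {0..1})"
    by (rule has_vector_derivative_transform[of _ _ _ "\<lambda>_. 0"]) (use Suc in auto)
  then show ?case using vector_derivative_within_01[OF Suc.prems] by simp
qed (use assms in simp)

lemma vanishing_in_Ysp:
  assumes "\<forall>x\<in>{0..1::real}. f x = 0"
  shows "f \<in> Ysp \<sigma>"
proof -
  have zero: "\<And>n x. x \<in> {0..1} \<Longrightarrow> dnth n f x = 0"
    using dnth_vanishing[OF assms] by blast
  have "sn_term \<sigma> k f = (\<lambda>_. 0)" for k
  proof
    fix n
    have "integral {0..1} (\<lambda>x. (x / \<sigma>) ^ k * (cmod (dnth n f x))\<^sup>2) = integral {0..1} (\<lambda>x::real. 0::real)"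
      by (rule integral_cong) (simp add: zero)
    then show "sn_term \<sigma> k f n = 0" by (simp add: sn_term_def)
  qed
  moreover have "dnth n f differentiable (at x within {0..1})" if "x \<in> {0..1}" for n x
    by (rule differentiableI_vector[of _ 0], rule has_vector_derivative_transform[of _ _ _ "\<lambda>_. 0"])
       (use that zero in auto)
  ultimately show ?thesis
    unfolding Ysp_def smooth01_def sn_fin_def bd_fin_def by (simp add: zero)
qed

context
  fixes u :: "real \<Rightarrow> complex"
  assumes dnth_deriv: "\<And>n x. x \<in> {0..1} \<Longrightarrow>
      (dnth n u has_vector_derivative dnth (Suc n) u x) (at x within {0..1})"
begin

lemma Lop_expand:
  assumes "x \<in> {0..1}"
  shows "Lop W s u x = of_real (x\<^sup>2) * dnth 2 u x + of_real (2 * x) * dnth 1 u x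
                       + s * dnth 1 u x - poly W (of_real x) * u x"
proof -
  have "((\<lambda>y. complex_of_real (y\<^sup>2)) has_vector_derivative of_real (2 * x)) (at x within {0..1})"
    by (rule has_vector_derivative_of_real) (auto intro!: derivative_eq_intros)
  from has_vector_derivative_mult[OF this dnth_deriv[OF assms, of 1]]
  have "vector_derivative (\<lambda>y. of_real (y\<^sup>2) * dnth 1 u y) (at x within {0..1})
      = of_real (x\<^sup>2) * dnth 2 u x + of_real (2 * x) * dnth 1 u x"
    by (intro vector_derivative_within_01[OF assms]) (simp add: numeral_2_eq_2)
  then show ?thesis by (simp add: Lop_def)
qed

lemma Lop_vanishes_on_closure:
  assumes "\<forall>x\<in>{0<..<1}. Lop W s u x = 0"
  shows "\<forall>x\<in>{0..1}. Lop W s u x = 0"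
proof -
  have cont: "continuous_on {0..1} (dnth n u)" for n
    using dnth_deriv
    by (metis continuous_on_eq_continuous_within differentiableI_vector differentiable_imp_continuous_within)
  have "continuous_on {0..1} (\<lambda>x. of_real (x\<^sup>2) * dnth 2 u x + of_real (2 * x) * dnth 1 u x
                                   + s * dnth 1 u x - poly W (of_real x) * u x)"
    using cont[of 0] by (intro continuous_intros cont) simp
  then have "continuous_on {0..1} (Lop W s u)"
    by (rule continuous_on_eq) (simp add: Lop_expand)
  then show ?thesis
    using continuous_constant_on_closure[of "{0<..<1}" "Lop W s u" 0] assms by simp
qed

end

lemma powser_reflect_in_Xsp:
  fixes c :: "nat \<Rightarrow> complex"
  assumes "\<sigma> > 0" and "a > 0" and "\<sigma> < a\<^sup>2" and "c 0 = 0"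
    and decay: "\<And>m. m > 0 \<Longrightarrow> norm (c m) \<le> C * exp (-2 * a * sqrt (real m))"
    and u_eq: "\<And>x. x \<in> {0..1} \<Longrightarrow> u x = powser c (of_real (1 - x))"
  shows "u \<in> Xsp \<sigma>"
proof -
  define b where "b n = (\<Sum>m. real m ^ Suc n * norm (c m))" for n
  note moments = summable_moment_exp_sqrt_decay[OF assms(2,4) decay]
  have dnth1: "dnth n (dnth 1 u) = dnth (Suc n) u" for n
    by (induction n) auto
  have b_bound: "\<And>n x. x \<in> {0..1} \<Longrightarrow> cmod (dnth n (dnth 1 u) x) \<le> b n"
    unfolding dnth1 b_def using norm_dnth_powser_reflect_le[OF moments u_eq] by blast
  have "b n \<le> C * (\<Sum>m. 1 / real m ^ 2) * ((fact (n + 3))\<^sup>2 / a ^ (2 * (n + 3)))" for n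
    using suminf_moment_exp_sqrt_decay_le[OF assms(2,4) decay, of "Suc n"]
    unfolding b_def by (simp only: add_Suc_shift numeral_3_eq_3 numeral_2_eq_2)
  moreover have "0 \<le> b n" for n
    unfolding b_def by (intro suminf_nonneg moments) auto
  ultimately have weighted:
    "summable (\<lambda>n. \<sigma> ^ (2 * n) * (real n + 1)\<^sup>2 * (b n)\<^sup>2 / ((fact n)\<^sup>2 * (fact (n + 1))\<^sup>2))"
    using summable_weighted_factorial_bounds[OF assms(1-3)] by blast
  have "smooth01 u"
    unfolding smooth01_def
    using dnth_powser_reflect_has_vector_derivative[OF moments u_eq] differentiableI_vector by blast
  moreover have "u 1 = 0"
    using u_eq[of 1] \<open>c 0 = 0\<close> by (simp add: powser_def)
  ultimately show ?thesis
    unfolding Xsp_def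
    using sn_fin_of_dnth_bounds[OF assms(1) b_bound weighted]
      bd_fin_of_dnth_bounds[OF assms(1) b_bound weighted]
    by simp
qed

theorem mainTheorem18:
  fixes W :: "complex poly" and \<sigma> :: real and s :: complex and u :: "real \<Rightarrow> complex"
  assumes "\<sigma> > 0" and "Re s < 0" and "\<sigma> < (Re (csqrt s))^2"
    and "leaver_solution W s u"
    and "\<exists>x\<in>{0<..<1}. u x \<noteq> 0"
  shows "u \<in> Xsp \<sigma> \<and>
         (s \<in> Omega \<sigma> \<longrightarrow> u \<in> Dsp \<sigma> W s \<and> (\<forall>x\<in>{0..1}. Lop W s u x = 0)
                          \<and> (\<exists>x\<in>{0..1}. u x \<noteq> 0))"
proof -
  obtain c C where c0: "c 0 = 0"
    and decay: "\<And>m. m > 0 \<Longrightarrow> norm (c m) \<le> C * exp (-2 * Re (csqrt s) * sqrt (real m))"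
    and u_eq: "\<And>x. x \<in> {0..1} \<Longrightarrow> u x = powser c (of_real (1 - x))"
    and L_open: "\<forall>x\<in>{0<..<1}. Lop W s u x = 0"
    using leaver_solution_powser[OF assms(4)] by metis
  have a: "Re (csqrt s) > 0"
    using Re_csqrt[of s] assms(1,3) by (cases "Re (csqrt s) = 0") auto
  then have uX: "u \<in> Xsp \<sigma>"
    using powser_reflect_in_Xsp[OF assms(1) _ assms(3) c0 decay u_eq] by blast
  note moments = summable_moment_exp_sqrt_decay[OF a c0 decay]
  have "(dnth n u has_vector_derivative dnth (Suc n) u x) (at x within {0..1})"
    if "x \<in> {0..1}" for n x
    using dnth_powser_reflect_has_vector_derivative[OF moments u_eq that] .
  then have L: "\<forall>x\<in>{0..1}. Lop W s u x = 0"
    using Lop_vanishes_on_closure L_open by blast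
  show ?thesis
    using uX L vanishing_in_Ysp[OF L] assms(5) unfolding Dsp_def by auto
qed

end
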